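(* Let $(E,\|\cdot\|)$ be a real Banach space, $I=[a,b]$ a closed real interval, $E_0=C(I,E)$ the space of continuous functions $I\to E$, and fix $c\in I$. Let $\mathcal{K}$ be the set of constant functions in $E_0$, let $\alpha:E\times E\to[0,\infty)$ and let $\mathcal{T}:E_0\to E$ be a mapping. Assume: (a) $\mathcal{T}$ is $\alpha$-admissible: for all $\varphi,\xi\in E_0$, $\alpha(\varphi(c),\xi(c))\ge1$ implies $\alpha(\mathcal{T}\varphi,\mathcal{T}\xi)\ge1$; (b) $\mathcal{T}$ is $E_0$-starting: there exists $\varphi_0\in E_0$ with $\alpha(\varphi_0(c),\mathcal{T}\varphi_0)\ge1$. Then $\mathcal{T}$ is $\mathcal{K}$-starting: there exists $\varphi_0\in\mathcal{K}$ with $\alpha(\varphi_0(c),\mathcal{T}\varphi_0)\ge1$. *)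

theory Defs
  imports "HOL-Analysis.Analysis"
begin

definition E0 :: "real \<Rightarrow> real \<Rightarrow> (real \<Rightarrow> 'e::banach) set" where
  "E0 a b = {f. continuous_on {a..b} f}"

definition Kconst :: "real \<Rightarrow> real \<Rightarrow> (real \<Rightarrow> 'e::banach) set" where
  "Kconst a b = {f \<in> E0 a b. \<exists>x. \<forall>t\<in>{a..b}. f t = x}"

definition alpha_admissible ::
  "real \<Rightarrow> real \<Rightarrow> real \<Rightarrow> ('e::banach \<Rightarrow> 'e \<Rightarrow> real) \<Rightarrow> ((real \<Rightarrow> 'e) \<Rightarrow> 'e) \<Rightarrow> bool" where
  "alpha_admissible a b c \<alpha> T \<longleftrightarrow>
     (\<forall>\<phi>\<in>E0 a b. \<forall>\<xi>\<in>E0 a b. \<alpha> (\<phi> c) (\<xi> c) \<ge> 1 \<longrightarrow> \<alpha> (T \<phi>) (T \<xi>) \<ge> 1)"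

definition starting ::
  "(real \<Rightarrow> 'e::banach) set \<Rightarrow> real \<Rightarrow> ('e \<Rightarrow> 'e \<Rightarrow> real) \<Rightarrow> ((real \<Rightarrow> 'e) \<Rightarrow> 'e) \<Rightarrow> bool" where
  "starting S c \<alpha> T \<longleftrightarrow> (\<exists>\<phi>0\<in>S. \<alpha> (\<phi>0 c) (T \<phi>0) \<ge> 1)"

end

theory Submission
  imports Defs
begin

text \<open>If \<open>\<phi>\<close> is a starting point, so is the constant function with value \<open>T \<phi>\<close>:
  it takes the value \<open>T \<phi>\<close> at \<open>c\<close>, and admissibility applied to \<open>\<phi>\<close> and this
  constant function turns \<open>\<alpha> (\<phi> c) (T \<phi>) \<ge> 1\<close> into \<open>\<alpha> (T \<phi>) (T (\<lambda>_. T \<phi>)) \<ge> 1\<close>.\<close>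

lemma const_in_Kconst: "(\<lambda>_. x) \<in> Kconst a b"
  by (simp add: Kconst_def E0_def)

lemma alpha_admissible_const_starting:
  assumes "alpha_admissible a b c \<alpha> T"
    and "\<phi> \<in> E0 a b" and "\<alpha> (\<phi> c) (T \<phi>) \<ge> 1"
  shows "\<alpha> (T \<phi>) (T (\<lambda>_. T \<phi>)) \<ge> 1"
  using assms const_in_Kconst[of "T \<phi>" a b]
  unfolding alpha_admissible_def Kconst_def by auto

theorem proposition4:
  fixes a b c :: real
    and \<alpha> :: "'e::banach \<Rightarrow> 'e \<Rightarrow> real"
    and T :: "(real \<Rightarrow> 'e) \<Rightarrow> 'e"
  assumes "a \<le> b"
    and "c \<in> {a..b}"
    and "\<forall>x y. \<alpha> x y \<ge> 0"
    and "alpha_admissible a b c \<alpha> T"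
    and "starting (E0 a b) c \<alpha> T"
  shows "starting (Kconst a b) c \<alpha> T"
proof -
  obtain \<phi> where "\<phi> \<in> E0 a b" "\<alpha> (\<phi> c) (T \<phi>) \<ge> 1"
    using assms(5) unfolding starting_def by blast
  with assms(4) have "\<alpha> (T \<phi>) (T (\<lambda>_. T \<phi>)) \<ge> 1"
    by (rule alpha_admissible_const_starting)
  then show ?thesis
    unfolding starting_def using const_in_Kconst[of "T \<phi>" a b] by force
qed

end
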